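(* Let $d\in\mathbb N$, let $F$ be a countable locally finite structure, $G=\mathrm{Aut}(F)$ (with the pointwise convergence topology), and let $A\in\mathrm{Age}(F)$ be such that $F$ is $A$-homogeneous. If $|M(G)|\le d$, then $F\hookrightarrow(B)^A_{k,d}$ for all $B\in\mathrm{Age}(F)$ and all $k\ge 2$.
   Context: For structures $A,B$, $B^A$ is the set of embeddings of $A$ into $B$. $\mathrm{Age}(F)$ is the class of finitely generated structures embeddable in $F$. $F$ is $A$-homogeneous if for all $a,a'\in F^A$ there is $g\in\mathrm{Aut}(F)$ with $g\circ a=a'$. $M(G)$ is the universal minimal $G$-flow (flows are continuous actions on compact Hausdorff spaces). $F\hookrightarrow(B)^A_{k,d}$ means: for every $\chi:F^A\to\{0,\dots,k-1\}$ there is $b\in F^B$ with $|\chi(\{b\circ a:a\in B^A\})|\le d$. *)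

theory Defs
  imports "HOL-Analysis.Analysis"
begin

text \<open>First-order structures: a domain, interpretations of function symbols
 (constants are 0-ary functions) and relation symbols, and the signature (arities).\<close>

record ('f,'r,'a) struc =
  sdom :: "'a set"
  sfn :: "'f \<Rightarrow> 'a list \<Rightarrow> 'a"
  srl :: "'r \<Rightarrow> 'a list \<Rightarrow> bool"
  far :: "'f \<Rightarrow> nat"
  rar :: "'r \<Rightarrow> nat"

definition wf_struc :: "('f,'r,'a) struc \<Rightarrow> bool" where
  "wf_struc A \<longleftrightarrow>
     (\<forall>f xs. set xs \<subseteq> sdom A \<and> length xs = far A f \<longrightarrow> sfn A f xs \<in> sdom A)"

definition embeddings :: "('f,'r,'b) struc \<Rightarrow> ('f,'r,'a) struc \<Rightarrow> ('b \<Rightarrow> 'a) set" where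
  "embeddings A B = {e. far A = far B \<and> rar A = rar B \<and>
     e \<in> sdom A \<rightarrow>\<^sub>E sdom B \<and> inj_on e (sdom A) \<and>
     (\<forall>f xs. set xs \<subseteq> sdom A \<and> length xs = far A f \<longrightarrow> e (sfn A f xs) = sfn B f (map e xs)) \<and>
     (\<forall>r xs. set xs \<subseteq> sdom A \<and> length xs = rar A r \<longrightarrow> (srl A r xs \<longleftrightarrow> srl B r (map e xs)))}"

definition closed_sub :: "('f,'r,'a) struc \<Rightarrow> 'a set \<Rightarrow> bool" where
  "closed_sub A T \<longleftrightarrow> T \<subseteq> sdom A \<and>
     (\<forall>f xs. set xs \<subseteq> T \<and> length xs = far A f \<longrightarrow> sfn A f xs \<in> T)"

definition generated :: "('f,'r,'a) struc \<Rightarrow> 'a set \<Rightarrow> 'a set" where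
  "generated A S = \<Inter>{T. S \<subseteq> T \<and> closed_sub A T}"

definition fin_generated :: "('f,'r,'a) struc \<Rightarrow> bool" where
  "fin_generated A \<longleftrightarrow> (\<exists>S. finite S \<and> S \<subseteq> sdom A \<and> generated A S = sdom A)"

definition locally_finite :: "('f,'r,'a) struc \<Rightarrow> bool" where
  "locally_finite F \<longleftrightarrow> (\<forall>S. finite S \<and> S \<subseteq> sdom F \<longrightarrow> finite (generated F S))"

definition in_age :: "('f,'r,'b) struc \<Rightarrow> ('f,'r,'a) struc \<Rightarrow> bool" where
  "in_age A F \<longleftrightarrow> wf_struc A \<and> fin_generated A \<and> embeddings A F \<noteq> {}"

definition Aut :: "('f,'r,'a) struc \<Rightarrow> ('a \<Rightarrow> 'a) set" where
  "Aut F = {g \<in> embeddings F F. g ` sdom F = sdom F}"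

definition homogeneous_for :: "('f,'r,'a) struc \<Rightarrow> ('f,'r,'b) struc \<Rightarrow> bool" where
  "homogeneous_for F A \<longleftrightarrow>
     (\<forall>a\<in>embeddings A F. \<forall>a'\<in>embeddings A F. \<exists>g\<in>Aut F. compose (sdom A) g a = a')"

definition aut_topology :: "('f,'r,'a) struc \<Rightarrow> ('a \<Rightarrow> 'a) topology" where
  "aut_topology F =
     subtopology (product_topology (\<lambda>_. discrete_topology (sdom F)) (sdom F)) (Aut F)"

definition flow :: "('f,'r,'a) struc \<Rightarrow> 'x topology \<Rightarrow> (('a \<Rightarrow> 'a) \<Rightarrow> 'x \<Rightarrow> 'x) \<Rightarrow> bool" where
  "flow F T act \<longleftrightarrow> compact_space T \<and> Hausdorff_space T \<and>
     continuous_map (prod_topology (aut_topology F) T) T (\<lambda>(g,x). act g x) \<and>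
     (\<forall>x\<in>topspace T. act (restrict id (sdom F)) x = x) \<and>
     (\<forall>g\<in>Aut F. \<forall>h\<in>Aut F. \<forall>x\<in>topspace T. act (compose (sdom F) g h) x = act g (act h x))"

definition minimal_flow :: "('f,'r,'a) struc \<Rightarrow> 'x topology \<Rightarrow> (('a \<Rightarrow> 'a) \<Rightarrow> 'x \<Rightarrow> 'x) \<Rightarrow> bool" where
  "minimal_flow F T act \<longleftrightarrow> flow F T act \<and> topspace T \<noteq> {} \<and>
     (\<forall>Z. closedin T Z \<and> Z \<noteq> {} \<and> (\<forall>g\<in>Aut F. \<forall>x\<in>Z. act g x \<in> Z) \<longrightarrow> Z = topspace T)"

definition flow_hom :: "('f,'r,'a) struc \<Rightarrow> 'x topology \<Rightarrow> (('a \<Rightarrow> 'a) \<Rightarrow> 'x \<Rightarrow> 'x)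
    \<Rightarrow> 'y topology \<Rightarrow> (('a \<Rightarrow> 'a) \<Rightarrow> 'y \<Rightarrow> 'y) \<Rightarrow> ('x \<Rightarrow> 'y) \<Rightarrow> bool" where
  "flow_hom F T act T' act' h \<longleftrightarrow> continuous_map T T' h \<and>
     (\<forall>g\<in>Aut F. \<forall>x\<in>topspace T. h (act g x) = act' g (h x))"

text \<open>A universe type of cardinality 2^(2^continuum), large enough to carry an
 isomorphic copy of every minimal flow of Aut(F) for countable F.\<close>
type_synonym flow_univ = "((nat \<Rightarrow> bool) \<Rightarrow> bool) \<Rightarrow> bool"

definition universal_minimal_flow ::
    "('f,'r,'a) struc \<Rightarrow> 'x topology \<Rightarrow> (('a \<Rightarrow> 'a) \<Rightarrow> 'x \<Rightarrow> 'x) \<Rightarrow> bool" where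
  "universal_minimal_flow F T act \<longleftrightarrow> minimal_flow F T act \<and>
     (\<forall>(T'::flow_univ topology) act'. minimal_flow F T' act' \<longrightarrow> (\<exists>h. flow_hom F T act T' act' h))"

definition UMF_card_le :: "('f,'r,'a) struc \<Rightarrow> nat \<Rightarrow> bool" where
  "UMF_card_le F d \<longleftrightarrow> (\<exists>(T::flow_univ topology) act.
     universal_minimal_flow F T act \<and> finite (topspace T) \<and> card (topspace T) \<le> d)"

definition arrows :: "('f,'r,'a) struc \<Rightarrow> ('f,'r,'c) struc \<Rightarrow> ('f,'r,'b) struc \<Rightarrow> nat \<Rightarrow> nat \<Rightarrow> bool" where
  "arrows F B A k d \<longleftrightarrow>
     (\<forall>(col :: (('b \<Rightarrow> 'a) \<Rightarrow> nat)). col ` embeddings A F \<subseteq> {..<k} \<longrightarrow>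
        (\<exists>b\<in>embeddings B F. card (col ` ((\<lambda>a. compose (sdom A) b a) ` embeddings A B)) \<le> d))"

end

theory Submission
  imports Defs
begin

text \<open>
  Colour the copies of \<open>A\<close> in \<open>F\<close> with \<open>k\<close> colours. The colouring \<open>\<chi>\<close> is a point of the compact
  \<open>Aut F\<close>-flow \<open>k\<^bsup>F\<^sup>A\<^esup>\<close>, and its orbit closure contains a minimal subflow \<open>Y\<close>. As \<open>F\<^sup>A\<close> is countable,
  \<open>Y\<close> is (a copy of) a minimal flow of \<open>Aut F\<close>, hence a factor of the universal one and so has at
  most \<open>d\<close> points. By \<open>A\<close>-homogeneity every colour of a point \<open>c \<in> Y\<close> is the colour of a fixed
  copy \<open>a\<^sub>0\<close> under some point of \<open>Y\<close>, so \<open>c\<close> uses at most \<open>d\<close> colours. Since \<open>c\<close> is a limit of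
  translates of \<open>\<chi>\<close>, some translate agrees with \<open>c\<close> on the finitely many copies of \<open>A\<close> inside a
  fixed copy of \<open>B\<close>; pulling that copy of \<open>B\<close> back gives the required \<open>b\<close>.
\<close>

section \<open>Embeddings and the age of \<open>F\<close>\<close>

lemma embeddings_PiE: "e \<in> embeddings A B \<Longrightarrow> e \<in> sdom A \<rightarrow>\<^sub>E sdom B"
  unfolding embeddings_def by blast

lemma embedding_compose:
  assumes wf: "wf_struc C" and e: "e \<in> embeddings C D" and e': "e' \<in> embeddings D H"
  shows "compose (sdom C) e' e \<in> embeddings C H"
proof -
  have ePi: "e \<in> sdom C \<rightarrow>\<^sub>E sdom D" and e'Pi: "e' \<in> sdom D \<rightarrow>\<^sub>E sdom H"
    using e e' by (auto simp: embeddings_def)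
  have map_compose: "map (compose (sdom C) e' e) xs = map e' (map e xs)"
    and map_in: "set (map e xs) \<subseteq> sdom D" if "set xs \<subseteq> sdom C" for xs
    using that ePi by (auto simp: compose_def)
  show ?thesis
    unfolding embeddings_def
  proof (intro CollectI conjI allI impI)
    show "far C = far H" "rar C = rar H" using e e' by (auto simp: embeddings_def)
    show "compose (sdom C) e' e \<in> sdom C \<rightarrow>\<^sub>E sdom H"
      using ePi e'Pi by (auto simp: compose_def)
    show "inj_on (compose (sdom C) e' e) (sdom C)"
      using e e' ePi unfolding embeddings_def inj_on_def compose_def by (auto simp: PiE_iff)
  next
    fix f xs assume xs: "set xs \<subseteq> sdom C \<and> length xs = far C f"
    then have "sfn C f xs \<in> sdom C" using wf unfolding wf_struc_def by blast
    then have "compose (sdom C) e' e (sfn C f xs) = e' (e (sfn C f xs))" by (simp add: compose_def)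
    also have "\<dots> = e' (sfn D f (map e xs))" using e xs unfolding embeddings_def by auto
    also have "\<dots> = sfn H f (map e' (map e xs))"
      using e e' xs map_in[of xs] unfolding embeddings_def by auto
    finally show "compose (sdom C) e' e (sfn C f xs) = sfn H f (map (compose (sdom C) e' e) xs)"
      by (simp only: map_compose[OF conjunct1[OF xs]])
  next
    fix r xs assume xs: "set xs \<subseteq> sdom C \<and> length xs = rar C r"
    have "srl C r xs = srl D r (map e xs)" using e xs unfolding embeddings_def by auto
    also have "\<dots> = srl H r (map e' (map e xs))"
      using e e' xs map_in[of xs] unfolding embeddings_def by auto
    finally show "srl C r xs = srl H r (map (compose (sdom C) e' e) xs)"
      by (simp only: map_compose[OF conjunct1[OF xs]])
  qed
qed

lemma finite_embeddings:
  assumes "finite (sdom A)" and "finite (sdom B)"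
  shows "finite (embeddings A B)"
  using finite_subset[OF _ finite_PiE[OF assms]] embeddings_PiE by blast

lemma countable_embeddings:
  assumes "finite (sdom A)" and "countable (sdom B)"
  shows "countable (embeddings A B)"
  using countable_subset[OF _ countable_PiE[OF assms]] embeddings_PiE by blast

lemma sfn_in_generated:
  "set ys \<subseteq> generated F X \<Longrightarrow> length ys = far F f \<Longrightarrow> sfn F f ys \<in> generated F X"
  unfolding generated_def closed_sub_def by blast

lemma embedding_image_generated:
  assumes wf: "wf_struc C" and e: "e \<in> embeddings C F" and S: "S \<subseteq> sdom C"
  shows "e ` generated C S \<subseteq> generated F (e ` S)"
proof -
  let ?G = "generated F (e ` S)"
  define T where "T = {x \<in> sdom C. e x \<in> ?G}"
  have "closed_sub C T"
    unfolding closed_sub_def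
  proof (intro conjI allI impI)
    fix f xs assume xs: "set xs \<subseteq> T \<and> length xs = far C f"
    then have xsC: "set xs \<subseteq> sdom C" by (auto simp: T_def)
    have "e (sfn C f xs) = sfn F f (map e xs)" using e xsC xs by (auto simp: embeddings_def)
    moreover have "sfn F f (map e xs) \<in> ?G"
      using xs e by (intro sfn_in_generated) (auto simp: T_def embeddings_def)
    ultimately show "sfn C f xs \<in> T" using wf xsC xs by (auto simp: T_def wf_struc_def)
  qed (auto simp: T_def)
  moreover have "S \<subseteq> T" using S by (auto simp: T_def generated_def)
  ultimately have "generated C S \<subseteq> T" unfolding generated_def by blast
  then show ?thesis by (auto simp: T_def)
qed

lemma in_age_finite:
  assumes lf: "locally_finite F" and C: "in_age C F"
  shows "finite (sdom C)"
proof -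
  obtain S where S: "finite S" "S \<subseteq> sdom C" "generated C S = sdom C"
    using C by (auto simp: in_age_def fin_generated_def)
  obtain e where e: "e \<in> embeddings C F" using C by (auto simp: in_age_def)
  have "e ` sdom C \<subseteq> generated F (e ` S)"
    using embedding_image_generated[OF _ e S(2)] C S(3) by (simp add: in_age_def)
  moreover have "finite (generated F (e ` S))"
    using lf S embeddings_PiE[OF e] by (auto simp: locally_finite_def)
  ultimately have "finite (e ` sdom C)" by (rule finite_subset)
  moreover have "inj_on e (sdom C)" using e by (simp add: embeddings_def)
  ultimately show ?thesis by (simp add: finite_image_iff)
qed

section \<open>The automorphism group\<close>

lemma Aut_embedding: "g \<in> Aut F \<Longrightarrow> g \<in> embeddings F F"
  unfolding Aut_def by blast

lemma Aut_PiE: "g \<in> Aut F \<Longrightarrow> g \<in> sdom F \<rightarrow>\<^sub>E sdom F"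
  by (rule embeddings_PiE[OF Aut_embedding])

lemma Aut_bij_betw: "g \<in> Aut F \<Longrightarrow> bij_betw g (sdom F) (sdom F)"
  unfolding Aut_def embeddings_def bij_betw_def by blast

definition aut_inv :: "('f,'r,'a) struc \<Rightarrow> ('a \<Rightarrow> 'a) \<Rightarrow> 'a \<Rightarrow> 'a" where
  "aut_inv F g = restrict (inv_into (sdom F) g) (sdom F)"

lemma aut_inv_in: "g \<in> Aut F \<Longrightarrow> y \<in> sdom F \<Longrightarrow> aut_inv F g y \<in> sdom F"
  unfolding aut_inv_def using Aut_bij_betw[of g F] by (simp add: bij_betw_def inv_into_into)

lemma aut_inv_right: "g \<in> Aut F \<Longrightarrow> y \<in> sdom F \<Longrightarrow> g (aut_inv F g y) = y"
  unfolding aut_inv_def using Aut_bij_betw[of g F] by (simp add: bij_betw_def f_inv_into_f)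

lemma aut_inv_left: "g \<in> Aut F \<Longrightarrow> x \<in> sdom F \<Longrightarrow> aut_inv F g (g x) = x"
  unfolding aut_inv_def using Aut_bij_betw[of g F] Aut_PiE[of g F] by (auto simp: bij_betw_def)

lemma aut_inv_Aut:
  assumes wf: "wf_struc F" and g: "g \<in> Aut F"
  shows "aut_inv F g \<in> Aut F"
proof -
  let ?h = "aut_inv F g"
  have map_cancel: "map g (map ?h xs) = xs" and map_in: "set (map ?h xs) \<subseteq> sdom F"
    if "set xs \<subseteq> sdom F" for xs
    using that aut_inv_right[OF g] aut_inv_in[OF g] by (induct xs) auto
  have "?h ` sdom F = sdom F"
    using aut_inv_in[OF g] aut_inv_left[OF g] Aut_PiE[OF g] by (force simp: image_iff)
  moreover have "?h \<in> embeddings F F"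
    unfolding embeddings_def
  proof (intro CollectI conjI allI impI)
    show "?h \<in> sdom F \<rightarrow>\<^sub>E sdom F" using aut_inv_in[OF g] by (auto simp: aut_inv_def)
    show "inj_on ?h (sdom F)" by (metis aut_inv_right[OF g] inj_onI)
  next
    fix f xs assume xs: "set xs \<subseteq> sdom F \<and> length xs = far F f"
    then have "sfn F f (map ?h xs) \<in> sdom F" using wf map_in[of xs] unfolding wf_struc_def by auto
    moreover have "g (sfn F f (map ?h xs)) = sfn F f xs"
      using Aut_embedding[OF g] map_in[of xs] map_cancel[of xs] xs unfolding embeddings_def by auto
    ultimately show "?h (sfn F f xs) = sfn F f (map ?h xs)" by (metis aut_inv_left[OF g])
  next
    fix r xs assume xs: "set xs \<subseteq> sdom F \<and> length xs = rar F r"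
    then show "srl F r xs = srl F r (map ?h xs)"
      using Aut_embedding[OF g] map_in[of xs] map_cancel[of xs] unfolding embeddings_def by auto
  qed simp_all
  ultimately show ?thesis by (simp add: Aut_def)
qed

lemma id_Aut:
  assumes wf: "wf_struc F"
  shows "restrict id (sdom F) \<in> Aut F"
proof -
  have map_id: "map (restrict id (sdom F)) xs = xs" if "set xs \<subseteq> sdom F" for xs
    using that by (induct xs) auto
  have "restrict id (sdom F) \<in> embeddings F F"
    unfolding embeddings_def using wf map_id by (auto simp: wf_struc_def inj_on_def)
  then show ?thesis unfolding Aut_def by simp
qed

lemma aut_inv_id: "aut_inv F (restrict id (sdom F)) = restrict id (sdom F)"
  unfolding aut_inv_def by (rule ext) (auto simp: inv_into_def)

lemma compose_Aut:
  assumes wf: "wf_struc F" and g: "g \<in> Aut F" and h: "h \<in> Aut F"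
  shows "compose (sdom F) g h \<in> Aut F"
proof -
  have "compose (sdom F) g h ` sdom F = sdom F"
  proof (rule surj_compose)
    show "h ` sdom F = sdom F" "g ` sdom F = sdom F" using g h unfolding Aut_def by blast+
  qed
  then show ?thesis
    using embedding_compose[OF wf Aut_embedding[OF h] Aut_embedding[OF g]] by (simp add: Aut_def)
qed

lemma aut_inv_compose:
  assumes wf: "wf_struc F" and g: "g \<in> Aut F" and h: "h \<in> Aut F"
  shows "aut_inv F (compose (sdom F) g h) = compose (sdom F) (aut_inv F h) (aut_inv F g)"
proof (rule ext)
  fix x show "aut_inv F (compose (sdom F) g h) x = compose (sdom F) (aut_inv F h) (aut_inv F g) x"
  proof (cases "x \<in> sdom F")
    case True
    let ?y = "aut_inv F h (aut_inv F g x)"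
    have y: "?y \<in> sdom F" using aut_inv_in[OF h aut_inv_in[OF g True]] .
    have "compose (sdom F) g h ?y = x"
      using y aut_inv_right[OF h aut_inv_in[OF g True]] aut_inv_right[OF g True]
      by (simp add: compose_def)
    then show ?thesis
      using aut_inv_left[OF compose_Aut[OF wf g h] y] True by (simp add: compose_def)
  qed (simp add: aut_inv_def compose_def)
qed

lemma compose_aut_inv_cancel:
  assumes g: "g \<in> Aut F" and a: "a \<in> sdom A \<rightarrow>\<^sub>E sdom F"
  shows "compose (sdom A) (aut_inv F g) (compose (sdom A) g a) = a"
proof (rule ext)
  fix z show "compose (sdom A) (aut_inv F g) (compose (sdom A) g a) z = a z"
  proof (cases "z \<in> sdom A")
    case True
    then show ?thesis using aut_inv_left[OF g PiE_mem[OF a True]] by (simp add: compose_def)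
  qed (simp add: compose_def PiE_arb[OF a])
qed

lemma compose_restrict_id:
  assumes a: "a \<in> sdom A \<rightarrow>\<^sub>E sdom F"
  shows "compose (sdom A) (restrict id (sdom F)) a = a"
proof (rule ext)
  fix z show "compose (sdom A) (restrict id (sdom F)) a z = a z"
  proof (cases "z \<in> sdom A")
    case True
    then show ?thesis using PiE_mem[OF a True] by (simp add: compose_def)
  qed (simp add: compose_def PiE_arb[OF a])
qed

section \<open>The flow of colourings\<close>

lemma openin_product_agree_finite:
  assumes "finite S" and "S \<subseteq> I" and "\<forall>i\<in>S. v i \<in> U"
  shows "openin (product_topology (\<lambda>_. discrete_topology U) I) {f \<in> I \<rightarrow>\<^sub>E U. \<forall>i\<in>S. f i = v i}"
proof -
  have "{f \<in> I \<rightarrow>\<^sub>E U. \<forall>i\<in>S. f i = v i} = PiE I (\<lambda>i. if i \<in> S then {v i} else U)"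
    using assms(2,3) by (auto simp: PiE_iff extensional_def split: if_splits)
  moreover have "openin (product_topology (\<lambda>_. discrete_topology U) I) (PiE I (\<lambda>i. if i \<in> S then {v i} else U))"
    using assms by (subst openin_PiE_gen) (auto intro: finite_subset[OF _ assms(1)])
  ultimately show ?thesis by simp
qed

lemma continuous_map_discrete_locally_constant:
  assumes "f \<in> topspace X \<rightarrow> U"
    and "\<And>x. x \<in> topspace X \<Longrightarrow> \<exists>N. openin X N \<and> x \<in> N \<and> (\<forall>y\<in>N. f y = f x)"
  shows "continuous_map X (discrete_topology U) f"
  unfolding continuous_map_openin_preimage_eq
proof (intro conjI allI impI)
  show "f \<in> topspace X \<rightarrow> topspace (discrete_topology U)" using assms(1) by simp
  fix V
  show "openin X (topspace X \<inter> f -` V)"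
  proof (subst openin_subopen, intro ballI)
    fix x assume x: "x \<in> topspace X \<inter> f -` V"
    then obtain N where N: "openin X N" "x \<in> N" "\<forall>y\<in>N. f y = f x" using assms(2) by blast
    have "N \<subseteq> f -` V" using N(3) x by auto
    then have "N \<subseteq> topspace X \<inter> f -` V" using openin_subset[OF N(1)] by blast
    then show "\<exists>T. openin X T \<and> x \<in> T \<and> T \<subseteq> topspace X \<inter> f -` V" using N by blast
  qed
qed

lemma topspace_aut_topology: "topspace (aut_topology F) = Aut F"
proof -
  have "Aut F \<subseteq> sdom F \<rightarrow>\<^sub>E sdom F" using Aut_PiE by blast
  then show ?thesis
    unfolding aut_topology_def topspace_subtopology topspace_product_topology topspace_discrete_topology
    by (rule Int_absorb1)
qed

definition colouring_space :: "('f,'r,'a) struc \<Rightarrow> ('f,'r,'b) struc \<Rightarrow> nat \<Rightarrow> (('b \<Rightarrow> 'a) \<Rightarrow> nat) topology" where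
  "colouring_space F A k = product_topology (\<lambda>_. discrete_topology {..<k}) (embeddings A F)"

definition colouring_action ::
    "('f,'r,'a) struc \<Rightarrow> ('f,'r,'b) struc \<Rightarrow> ('a \<Rightarrow> 'a) \<Rightarrow> (('b \<Rightarrow> 'a) \<Rightarrow> nat) \<Rightarrow> ('b \<Rightarrow> 'a) \<Rightarrow> nat" where
  "colouring_action F A g c =
     (if g \<in> Aut F then restrict (\<lambda>a. c (compose (sdom A) (aut_inv F g) a)) (embeddings A F) else c)"

lemma topspace_colouring_space: "topspace (colouring_space F A k) = embeddings A F \<rightarrow>\<^sub>E {..<k}"
  by (simp add: colouring_space_def)

lemma colouring_action_apply:
  "g \<in> Aut F \<Longrightarrow> a \<in> embeddings A F \<Longrightarrow> colouring_action F A g c a = c (compose (sdom A) (aut_inv F g) a)"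
  by (simp add: colouring_action_def)

lemma compose_Aut_embedding:
  "wf_struc A \<Longrightarrow> a \<in> embeddings A F \<Longrightarrow> g \<in> Aut F \<Longrightarrow> compose (sdom A) g a \<in> embeddings A F"
  by (rule embedding_compose[OF _ _ Aut_embedding])

lemma colouring_action_in_topspace:
  assumes "wf_struc A" and "wf_struc F" and g: "g \<in> Aut F" and c: "c \<in> topspace (colouring_space F A k)"
  shows "colouring_action F A g c \<in> topspace (colouring_space F A k)"
  using c compose_Aut_embedding[OF assms(1) _ aut_inv_Aut[OF assms(2) g]] g
  by (auto simp: colouring_action_def topspace_colouring_space)

lemma compose_aut_inv_locally_constant:
  assumes g0: "g0 \<in> Aut F" and g: "g \<in> Aut F" and a: "a \<in> sdom A \<rightarrow>\<^sub>E sdom F"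
    and agree: "\<forall>x\<in>aut_inv F g0 ` a ` sdom A. g x = g0 x"
  shows "compose (sdom A) (aut_inv F g) a = compose (sdom A) (aut_inv F g0) a"
proof (rule ext)
  fix z show "compose (sdom A) (aut_inv F g) a z = compose (sdom A) (aut_inv F g0) a z"
  proof (cases "z \<in> sdom A")
    case True
    let ?x = "aut_inv F g0 (a z)"
    have az: "a z \<in> sdom F" using PiE_mem[OF a True] .
    have "g ?x = a z" using agree True aut_inv_right[OF g0 az] by simp
    then have "aut_inv F g (a z) = ?x" using aut_inv_left[OF g aut_inv_in[OF g0 az]] by simp
    then show ?thesis using True by (simp add: compose_def)
  qed (simp add: compose_def)
qed

lemma colouring_action_locally_constant:
  assumes wfA: "wf_struc A" and wf: "wf_struc F" and finA: "finite (sdom A)"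
    and g0: "g0 \<in> Aut F" and c0: "c0 \<in> topspace (colouring_space F A k)" and a: "a \<in> embeddings A F"
  shows "\<exists>N. openin (prod_topology (aut_topology F) (colouring_space F A k)) N \<and> (g0, c0) \<in> N \<and>
           (\<forall>(g, c)\<in>N. colouring_action F A g c a = colouring_action F A g0 c0 a)"
proof -
  \<comment> \<open>\<open>(g\<cdot>c)(a)\<close> only depends on \<open>g\<close> on the finite set \<open>S\<close> and on \<open>c\<close> at the single point \<open>a'\<close>\<close>
  let ?E = "embeddings A F"
  define a' where "a' = compose (sdom A) (aut_inv F g0) a"
  define S where "S = aut_inv F g0 ` a ` sdom A"
  define U where "U = Aut F \<inter> {g \<in> sdom F \<rightarrow>\<^sub>E sdom F. \<forall>x\<in>S. g x = g0 x}"
  define V where "V = {c \<in> ?E \<rightarrow>\<^sub>E {..<k}. \<forall>b\<in>{a'}. c b = c0 b}"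
  have a': "a' \<in> ?E" unfolding a'_def using compose_Aut_embedding[OF wfA a aut_inv_Aut[OF wf g0]] .
  have S: "finite S" "S \<subseteq> sdom F"
    unfolding S_def using finA PiE_mem[OF embeddings_PiE[OF a]] aut_inv_in[OF g0] by auto
  have "openin (aut_topology F) U"
    unfolding aut_topology_def U_def
    by (intro openin_subtopology_Int2 openin_product_agree_finite S)
       (use S PiE_mem[OF Aut_PiE[OF g0]] in blast)
  moreover have "openin (colouring_space F A k) V"
    unfolding colouring_space_def V_def
    using a' PiE_mem[OF c0[unfolded topspace_colouring_space] a'] by (intro openin_product_agree_finite) auto
  ultimately have "openin (prod_topology (aut_topology F) (colouring_space F A k)) (U \<times> V)"
    by (simp add: openin_prod_Times_iff)
  moreover have "(g0, c0) \<in> U \<times> V"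
    using g0 Aut_PiE[OF g0] c0 by (simp add: U_def V_def topspace_colouring_space)
  moreover have "\<forall>(g, c)\<in>U \<times> V. colouring_action F A g c a = colouring_action F A g0 c0 a"
  proof (intro ballI, clarify)
    fix g c assume that: "g \<in> U" "c \<in> V"
    have g: "g \<in> Aut F" "\<forall>x\<in>S. g x = g0 x" and "c a' = c0 a'"
      using that by (simp_all add: U_def V_def)
    moreover have "compose (sdom A) (aut_inv F g) a = a'"
      unfolding a'_def using compose_aut_inv_locally_constant[OF g0 g(1) embeddings_PiE[OF a]] g(2)
      by (simp add: S_def)
    ultimately show "colouring_action F A g c a = colouring_action F A g0 c0 a"
      using g0 a by (simp add: colouring_action_apply a'_def)
  qed
  ultimately show ?thesis by blast
qed

lemma continuous_map_colouring_action:
  assumes wfA: "wf_struc A" and wf: "wf_struc F" and finA: "finite (sdom A)"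
  shows "continuous_map (prod_topology (aut_topology F) (colouring_space F A k)) (colouring_space F A k)
           (\<lambda>(g, c). colouring_action F A g c)"
proof -
  let ?E = "embeddings A F"
  let ?X = "prod_topology (aut_topology F) (colouring_space F A k)"
  let ?act = "\<lambda>(g, c). colouring_action F A g c"
  have pair: "g \<in> Aut F" "c \<in> topspace (colouring_space F A k)" if "(g, c) \<in> topspace ?X" for g c
    using that by (simp_all add: topspace_aut_topology)
  have "continuous_map ?X (discrete_topology {..<k}) (\<lambda>p. ?act p a)" if a: "a \<in> ?E" for a
  proof (rule continuous_map_discrete_locally_constant)
    show "(\<lambda>p. ?act p a) \<in> topspace ?X \<rightarrow> {..<k}"
    proof
      fix p assume "p \<in> topspace ?X"
      then obtain g c where p: "p = (g, c)" "(g, c) \<in> topspace ?X" by (cases p) simp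
      show "?act p a \<in> {..<k}"
        using colouring_action_in_topspace[OF wfA wf pair[OF p(2)]] a
        by (simp add: p(1) topspace_colouring_space PiE_iff)
    qed
  next
    fix p assume "p \<in> topspace ?X"
    then obtain g0 c0 where p: "p = (g0, c0)" "(g0, c0) \<in> topspace ?X" by (cases p) simp
    show "\<exists>N. openin ?X N \<and> p \<in> N \<and> (\<forall>q\<in>N. ?act q a = ?act p a)"
      using colouring_action_locally_constant[OF wfA wf finA pair[OF p(2)] a] by (simp add: p(1) split_beta)
  qed
  moreover have "?act ` topspace ?X \<subseteq> extensional ?E"
  proof (rule image_subsetI)
    fix p assume "p \<in> topspace ?X"
    then obtain g c where p: "p = (g, c)" "(g, c) \<in> topspace ?X" by (cases p) simp
    show "?act p \<in> extensional ?E" using pair[OF p(2)] by (simp add: p(1) colouring_action_def)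
  qed
  ultimately have "continuous_map ?X (product_topology (\<lambda>_. discrete_topology {..<k}) ?E) ?act"
    unfolding continuous_map_componentwise by blast
  then show ?thesis by (simp only: colouring_space_def)
qed

lemma flow_colouring_action:
  assumes wfA: "wf_struc A" and wf: "wf_struc F" and finA: "finite (sdom A)"
  shows "flow F (colouring_space F A k) (colouring_action F A)"
  unfolding flow_def
proof (intro conjI ballI)
  show "compact_space (colouring_space F A k)"
    by (simp add: colouring_space_def compact_space_product_topology compact_space_discrete_topology)
  show "Hausdorff_space (colouring_space F A k)"
    by (simp add: colouring_space_def Hausdorff_space_product_topology)
  show "continuous_map (prod_topology (aut_topology F) (colouring_space F A k)) (colouring_space F A k)
          (\<lambda>(g, c). colouring_action F A g c)"
    using continuous_map_colouring_action[OF assms] .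
next
  fix c assume c: "c \<in> topspace (colouring_space F A k)"
  have "colouring_action F A (restrict id (sdom F)) c = restrict c (embeddings A F)"
    using id_Aut[OF wf]
    by (auto simp: colouring_action_def aut_inv_id compose_restrict_id[OF embeddings_PiE] intro!: restrict_ext)
  also have "\<dots> = c" using c by (simp add: topspace_colouring_space)
  finally show "colouring_action F A (restrict id (sdom F)) c = c" .
next
  fix g h c assume g: "g \<in> Aut F" and h: "h \<in> Aut F" and c: "c \<in> topspace (colouring_space F A k)"
  have "compose (sdom A) (aut_inv F (compose (sdom F) g h)) a
        = compose (sdom A) (aut_inv F h) (compose (sdom A) (aut_inv F g) a)" if "a \<in> embeddings A F" for a
    unfolding aut_inv_compose[OF wf g h]
    by (rule compose_assoc[symmetric]) (use embeddings_PiE[OF that] in auto)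
  then show "colouring_action F A (compose (sdom F) g h) c = colouring_action F A g (colouring_action F A h c)"
    using compose_Aut[OF wf g h] g h compose_Aut_embedding[OF wfA _ aut_inv_Aut[OF wf g]]
    by (auto simp: colouring_action_def intro!: restrict_ext)
qed

section \<open>Minimal subflows\<close>

definition invariant_set :: "('f,'r,'a) struc \<Rightarrow> (('a \<Rightarrow> 'a) \<Rightarrow> 'x \<Rightarrow> 'x) \<Rightarrow> 'x set \<Rightarrow> bool" where
  "invariant_set F act Z \<longleftrightarrow> (\<forall>g\<in>Aut F. \<forall>x\<in>Z. act g x \<in> Z)"

definition minimal_invariant ::
    "('f,'r,'a) struc \<Rightarrow> 'x topology \<Rightarrow> (('a \<Rightarrow> 'a) \<Rightarrow> 'x \<Rightarrow> 'x) \<Rightarrow> 'x set \<Rightarrow> bool" where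
  "minimal_invariant F T act Y \<longleftrightarrow> closedin T Y \<and> Y \<noteq> {} \<and> invariant_set F act Y \<and>
     (\<forall>W. closedin T W \<and> W \<noteq> {} \<and> invariant_set F act W \<and> W \<subseteq> Y \<longrightarrow> W = Y)"

lemma flow_act_in_topspace:
  assumes "flow F T act" and "g \<in> Aut F" and "x \<in> topspace T"
  shows "act g x \<in> topspace T"
proof -
  have "continuous_map (prod_topology (aut_topology F) T) T (\<lambda>(g, x). act g x)"
    using assms(1) by (simp add: flow_def)
  moreover have "(g, x) \<in> topspace (prod_topology (aut_topology F) T)"
    using assms(2,3) by (simp add: topspace_aut_topology)
  ultimately show ?thesis using continuous_map_funspace Pi_mem by fastforce
qed

lemma continuous_map_flow_act:
  assumes "flow F T act" and "g \<in> Aut F"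
  shows "continuous_map T T (act g)"
proof -
  have "continuous_map T (prod_topology (aut_topology F) T) (\<lambda>x. (g, x))"
    using assms(2) by (intro continuous_map_pairedI) (simp_all add: topspace_aut_topology)
  moreover have "continuous_map (prod_topology (aut_topology F) T) T (\<lambda>(g, x). act g x)"
    using assms(1) by (simp add: flow_def)
  ultimately have "continuous_map T T ((\<lambda>(g, x). act g x) \<circ> (\<lambda>x. (g, x)))"
    by (rule continuous_map_compose)
  then show ?thesis by (simp add: o_def)
qed

lemma invariant_set_orbit_closure:
  assumes wf: "wf_struc F" and fl: "flow F T act" and x: "x \<in> topspace T"
  shows "invariant_set F act (T closure_of ((\<lambda>g. act g x) ` Aut F))"
  unfolding invariant_set_def
proof (intro ballI)
  fix g y assume g: "g \<in> Aut F" and y: "y \<in> T closure_of ((\<lambda>g. act g x) ` Aut F)"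
  have "act g ` (\<lambda>h. act h x) ` Aut F \<subseteq> (\<lambda>h. act h x) ` Aut F"
  proof (rule image_subsetI)
    fix y assume "y \<in> (\<lambda>h. act h x) ` Aut F"
    then obtain h where h: "h \<in> Aut F" and "y = act h x" by blast
    then have "act g y = act (compose (sdom F) g h) x" using fl g x by (simp add: flow_def)
    then show "act g y \<in> (\<lambda>h. act h x) ` Aut F" using compose_Aut[OF wf g h] by blast
  qed
  then have "T closure_of (act g ` (\<lambda>h. act h x) ` Aut F) \<subseteq> T closure_of ((\<lambda>h. act h x) ` Aut F)"
    by (rule closure_of_mono)
  moreover have "act g y \<in> T closure_of (act g ` (\<lambda>h. act h x) ` Aut F)"
    using continuous_map_image_closure_subset[OF continuous_map_flow_act[OF fl g]] y by blast
  ultimately show "act g y \<in> T closure_of ((\<lambda>g. act g x) ` Aut F)" by blast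
qed

lemma compact_space_Inter_chain_nonempty:
  assumes "compact_space T" and "\<C> \<noteq> {}" and "\<forall>D\<in>\<C>. closedin T D \<and> D \<noteq> {}"
    and chain: "\<forall>D\<in>\<C>. \<forall>D'\<in>\<C>. D \<subseteq> D' \<or> D' \<subseteq> D"
  shows "\<Inter>\<C> \<noteq> {}"
proof -
  have closed: "\<forall>D\<in>\<C>. closedin T D" using assms(3) by blast
  have "\<forall>\<F>. finite \<F> \<and> \<F> \<subseteq> \<C> \<longrightarrow> \<Inter>\<F> \<noteq> {}"
  proof (intro allI impI)
    fix \<F> assume \<F>: "finite \<F> \<and> \<F> \<subseteq> \<C>"
    show "\<Inter>\<F> \<noteq> {}"
    proof (cases "\<F> = {}")
      case False
      have "subset.chain UNIV \<F>" using chain \<F> by (auto simp: subset_chain_def)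
      then have "\<Inter>\<F> \<in> \<F>" using Inter_in_chain[OF conjunct1[OF \<F>] False] by blast
      then show ?thesis using assms(3) \<F> by blast
    qed simp
  qed
  with closed assms(1) show ?thesis unfolding compact_space_fip by blast
qed

lemma closed_invariant_Inter_chain:
  assumes fl: "flow F T act" and "\<C> \<noteq> {}"
    and closed: "\<forall>D\<in>\<C>. closedin T D \<and> D \<noteq> {} \<and> invariant_set F act D"
    and chain: "\<forall>D\<in>\<C>. \<forall>D'\<in>\<C>. D \<subseteq> D' \<or> D' \<subseteq> D"
  shows "closedin T (\<Inter>\<C>) \<and> \<Inter>\<C> \<noteq> {} \<and> invariant_set F act (\<Inter>\<C>)"
proof (intro conjI)
  show "closedin T (\<Inter>\<C>)" using assms(2) closed by (intro closedin_Inter) auto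
  show "\<Inter>\<C> \<noteq> {}"
    using fl assms(2) closed chain unfolding flow_def by (intro compact_space_Inter_chain_nonempty) auto
  show "invariant_set F act (\<Inter>\<C>)" using closed unfolding invariant_set_def by blast
qed

lemma exists_minimal_invariant_subset:
  assumes fl: "flow F T act" and Z: "closedin T Z" "Z \<noteq> {}" "invariant_set F act Z"
  shows "\<exists>Y\<subseteq>Z. minimal_invariant F T act Y"
proof -
  define \<A> where "\<A> = {W. closedin T W \<and> W \<noteq> {} \<and> invariant_set F act W \<and> W \<subseteq> Z}"
  have "\<exists>Y\<in>\<A>. \<forall>W\<in>\<A>. Y \<supseteq> W \<longrightarrow> W = Y"
  proof (rule predicate_Zorn)
    show "partial_order_on \<A> (relation_of (\<lambda>W Y. W \<supseteq> Y) \<A>)"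
      by (rule partial_order_on_relation_ofI) auto
  next
    fix \<C> assume \<C>: "\<C> \<in> Chains (relation_of (\<lambda>W Y. W \<supseteq> Y) \<A>)"
    have sub: "\<C> \<subseteq> \<A>" using Chains_relation_of[OF \<C>] .
    have chain: "\<forall>D\<in>\<C>. \<forall>D'\<in>\<C>. D \<subseteq> D' \<or> D' \<subseteq> D"
      using \<C> unfolding Chains_def relation_of_def by blast
    show "\<exists>Y\<in>\<A>. \<forall>W\<in>\<C>. W \<supseteq> Y"
    proof (cases "\<C> = {}")
      case True
      then show ?thesis using Z unfolding \<A>_def by blast
    next
      case False
      have "closedin T (\<Inter>\<C>) \<and> \<Inter>\<C> \<noteq> {} \<and> invariant_set F act (\<Inter>\<C>)"
        using sub unfolding \<A>_def by (intro closed_invariant_Inter_chain[OF fl False _ chain]) blast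
      moreover have "\<Inter>\<C> \<subseteq> Z" using False sub unfolding \<A>_def by blast
      ultimately show ?thesis unfolding \<A>_def by blast
    qed
  qed
  then obtain Y where Y: "Y \<in> \<A>" and min: "\<forall>W\<in>\<A>. W \<subseteq> Y \<longrightarrow> W = Y" by blast
  have "minimal_invariant F T act Y"
    unfolding minimal_invariant_def
  proof (intro conjI allI impI)
    show "closedin T Y" "Y \<noteq> {}" "invariant_set F act Y" using Y unfolding \<A>_def by blast+
  next
    fix W assume W: "closedin T W \<and> W \<noteq> {} \<and> invariant_set F act W \<and> W \<subseteq> Y"
    then have "W \<in> \<A>" using Y unfolding \<A>_def by blast
    then show "W = Y" using min W by blast
  qed
  moreover have "Y \<subseteq> Z" using Y unfolding \<A>_def by blast
  ultimately show ?thesis by blast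
qed

lemma minimal_flow_subtopology:
  assumes fl: "flow F T act" and Y: "minimal_invariant F T act Y"
  shows "minimal_flow F (subtopology T Y) act"
proof -
  have Ysub: "Y \<subseteq> topspace T" using Y closedin_subset unfolding minimal_invariant_def by blast
  then have ts: "topspace (subtopology T Y) = Y" by auto
  have "continuous_map (prod_topology (aut_topology F) T) T (\<lambda>(g, x). act g x)"
    using fl by (simp add: flow_def)
  then have "continuous_map (subtopology (prod_topology (aut_topology F) T) (topspace (aut_topology F) \<times> Y)) T
               (\<lambda>(g, x). act g x)"
    by (rule continuous_map_from_subtopology)
  then have "continuous_map (prod_topology (aut_topology F) (subtopology T Y)) T (\<lambda>(g, x). act g x)"
    by (simp add: subtopology_Times)
  moreover have "(\<lambda>(g, x). act g x) \<in> topspace (prod_topology (aut_topology F) (subtopology T Y)) \<rightarrow> Y"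
    using Y ts unfolding minimal_invariant_def invariant_set_def by (auto simp: topspace_aut_topology)
  ultimately have "continuous_map (prod_topology (aut_topology F) (subtopology T Y)) (subtopology T Y)
                     (\<lambda>(g, x). act g x)"
    by (rule continuous_map_into_subtopology)
  moreover have "compact_space (subtopology T Y)"
    using fl Y unfolding flow_def minimal_invariant_def
    by (intro compact_space_subtopology closedin_compact_space) blast+
  moreover have "Hausdorff_space (subtopology T Y)"
    using fl unfolding flow_def by (simp add: Hausdorff_space_subtopology)
  ultimately have "flow F (subtopology T Y) act"
    using fl Ysub unfolding flow_def ts by blast
  moreover have "Z = Y" if "closedin (subtopology T Y) Z" "Z \<noteq> {}" "invariant_set F act Z" for Z
    using Y that closedin_closed_subtopology[of T Y Z] unfolding minimal_invariant_def by auto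
  ultimately show ?thesis
    using Y ts unfolding minimal_flow_def minimal_invariant_def invariant_set_def by blast
qed

section \<open>Minimal flows are no larger than the universal one\<close>

lemma flow_hom_onto_minimal_flow:
  assumes flU: "flow F TU actU" and neU: "topspace TU \<noteq> {}" and mf: "minimal_flow F T act"
    and h: "flow_hom F TU actU T act h"
  shows "h ` topspace TU = topspace T"
proof -
  have hc: "continuous_map TU T h" using h by (simp add: flow_hom_def)
  have "compactin T (h ` topspace TU)"
    using flU by (intro image_compactin[OF _ hc]) (simp add: flow_def compact_space_def)
  then have "closedin T (h ` topspace TU)"
    using mf by (intro compactin_imp_closedin) (simp_all add: minimal_flow_def flow_def)
  moreover have "act g y \<in> h ` topspace TU" if g: "g \<in> Aut F" and "y \<in> h ` topspace TU" for g y
  proof -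
    obtain x where x: "x \<in> topspace TU" "y = h x" using \<open>y \<in> h ` topspace TU\<close> by blast
    then have "act g y = h (actU g x)" using h g by (simp add: flow_hom_def)
    then show ?thesis using flow_act_in_topspace[OF flU g x(1)] by simp
  qed
  ultimately show ?thesis using mf neU unfolding minimal_flow_def by blast
qed

lemma homeomorphic_maps_pullback_image:
  assumes inj: "inj_on f (topspace T)"
  shows "homeomorphic_maps T (pullback_topology (f ` topspace T) (inv_into (topspace T) f) T)
           f (inv_into (topspace T) f)"
  unfolding homeomorphic_maps_def
proof (intro conjI ballI)
  let ?j = "inv_into (topspace T) f"
  show "continuous_map T (pullback_topology (f ` topspace T) ?j T) f"
    using inj by (intro continuous_map_pullback' continuous_map_eq[OF continuous_map_id]) auto
  show "continuous_map (pullback_topology (f ` topspace T) ?j T) T ?j"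
    using continuous_map_pullback[OF continuous_map_id, of "f ` topspace T" ?j] by simp
  show "?j (f x) = x" if "x \<in> topspace T" for x using inj that by simp
  show "f (?j y) = y" if "y \<in> topspace (pullback_topology (f ` topspace T) ?j T)" for y
    using that by (auto simp: topspace_pullback_topology f_inv_into_f)
qed

lemma flow_conjugate:
  assumes fl: "flow F T act" and hom: "homeomorphic_maps T T' f j"
  shows "flow F T' (\<lambda>g z. f (act g (j z)))"
proof -
  have cf: "continuous_map T T' f" and cj: "continuous_map T' T j"
    and jf: "\<And>x. x \<in> topspace T \<Longrightarrow> j (f x) = x" and fj: "\<And>z. z \<in> topspace T' \<Longrightarrow> f (j z) = z"
    using hom by (simp_all add: homeomorphic_maps_def)
  have jT: "j z \<in> topspace T" if "z \<in> topspace T'" for z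
    using continuous_map_funspace[OF cj] that by blast
  have "T homeomorphic_space T'" using hom unfolding homeomorphic_space_def by blast
  then have "compact_space T'" "Hausdorff_space T'"
    using fl homeomorphic_compact_space homeomorphic_Hausdorff_space by (auto simp: flow_def)
  moreover have "continuous_map (prod_topology (aut_topology F) T') T' (\<lambda>(g, z). f (act g (j z)))"
  proof -
    have "continuous_map (prod_topology (aut_topology F) T') (prod_topology (aut_topology F) T)
            (\<lambda>p. (fst p, j (snd p)))"
      by (intro continuous_map_pairedI continuous_map_fst continuous_map_compose[OF continuous_map_snd cj, unfolded o_def])
    moreover have "continuous_map (prod_topology (aut_topology F) T) T (\<lambda>(g, x). act g x)"
      using fl by (simp add: flow_def)
    ultimately have "continuous_map (prod_topology (aut_topology F) T') T'
                       (f \<circ> (\<lambda>(g, x). act g x) \<circ> (\<lambda>p. (fst p, j (snd p))))"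
      using cf by (intro continuous_map_compose)
    then show ?thesis by (simp add: o_def split_def)
  qed
  moreover have "f (act (restrict id (sdom F)) (j z)) = z" if "z \<in> topspace T'" for z
    using fl jT[OF that] fj[OF that] by (simp add: flow_def)
  moreover have "f (act (compose (sdom F) g h) (j z)) = f (act g (j (f (act h (j z)))))"
    if "g \<in> Aut F" "h \<in> Aut F" "z \<in> topspace T'" for g h z
    using fl that jT[OF that(3)] jf[OF flow_act_in_topspace[OF fl that(2) jT[OF that(3)]]]
    by (simp add: flow_def)
  ultimately show ?thesis by (simp add: flow_def)
qed

lemma minimal_flow_conjugate:
  assumes mf: "minimal_flow F T act" and hom: "homeomorphic_maps T T' f j"
  shows "minimal_flow F T' (\<lambda>g z. f (act g (j z)))"
proof -
  have fl: "flow F T act" using mf by (simp add: minimal_flow_def)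
  have jf: "\<And>x. x \<in> topspace T \<Longrightarrow> j (f x) = x" and fj: "\<And>z. z \<in> topspace T' \<Longrightarrow> f (j z) = z"
    using hom by (simp_all add: homeomorphic_maps_def)
  have ts: "topspace T' = f ` topspace T"
    using homeomorphic_imp_surjective_map hom unfolding homeomorphic_maps_map by blast
  have "Z = topspace T'"
    if Z: "closedin T' Z" "Z \<noteq> {}" "\<forall>g\<in>Aut F. \<forall>z\<in>Z. f (act g (j z)) \<in> Z" for Z
  proof -
    have ZT: "Z \<subseteq> topspace T'" using closedin_subset[OF Z(1)] .
    have "closedin T (j ` Z)"
      using Z(1) homeomorphic_map_closedness_eq hom by (metis homeomorphic_maps_map)
    moreover have "act g x \<in> j ` Z" if "g \<in> Aut F" "x \<in> j ` Z" for g x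
    proof -
      obtain z where z: "z \<in> Z" "x = j z" using \<open>x \<in> j ` Z\<close> by blast
      then have "x \<in> topspace T" using ZT ts jf by auto
      moreover have "j (f (act g x)) \<in> j ` Z" using Z(3) that(1) z by blast
      ultimately show ?thesis using jf[OF flow_act_in_topspace[OF fl that(1)]] by simp
    qed
    ultimately have "j ` Z = topspace T" using mf Z(2) unfolding minimal_flow_def by blast
    then have "f ` j ` Z = topspace T'" using ts by simp
    moreover have "f ` j ` Z = Z" using fj ZT by (force simp: image_comp)
    ultimately show ?thesis by simp
  qed
  then show ?thesis using flow_conjugate[OF fl hom] mf ts unfolding minimal_flow_def by auto
qed

text \<open>Transport \<open>T\<close> to \<open>flow_univ\<close> along \<open>f\<close>; there the universal minimal flow maps onto it.\<close>
lemma minimal_flow_card_le: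
  fixes f :: "'x \<Rightarrow> flow_univ"
  assumes mf: "minimal_flow F T act" and inj: "inj_on f (topspace T)" and d: "UMF_card_le F d"
  shows "finite (topspace T) \<and> card (topspace T) \<le> d"
proof -
  define j where "j = inv_into (topspace T) f"
  define T' where "T' = pullback_topology (f ` topspace T) j T"
  have hom: "homeomorphic_maps T T' f j"
    unfolding T'_def j_def by (rule homeomorphic_maps_pullback_image[OF inj])
  have ts: "topspace T' = f ` topspace T"
    using homeomorphic_imp_surjective_map hom unfolding homeomorphic_maps_map by blast
  obtain TU :: "flow_univ topology" and actU
    where U: "universal_minimal_flow F TU actU" "finite (topspace TU)" "card (topspace TU) \<le> d"
    using d unfolding UMF_card_le_def by blast
  then obtain h where h: "flow_hom F TU actU T' (\<lambda>g z. f (act g (j z))) h"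
    using minimal_flow_conjugate[OF mf hom] unfolding universal_minimal_flow_def by blast
  have "h ` topspace TU = f ` topspace T"
    using flow_hom_onto_minimal_flow[OF _ _ minimal_flow_conjugate[OF mf hom] h] U(1) ts
    by (simp add: universal_minimal_flow_def minimal_flow_def)
  then have "finite (f ` topspace T)" and "card (f ` topspace T) \<le> d"
    using U(2,3) card_image_le[OF U(2), of h] finite_imageI[OF U(2), of h] by simp_all
  then show ?thesis using inj by (simp add: finite_image_iff card_image)
qed

section \<open>The Ramsey property\<close>

text \<open>A colouring of a countable set \<open>E\<close> is coded by the set of pairs \<open>(index of a, colour)\<close> it
  realises; this is how colour spaces embed into \<open>flow_univ\<close>.\<close>
definition colouring_code :: "'b set \<Rightarrow> ('b \<Rightarrow> nat) \<Rightarrow> flow_univ" where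
  "colouring_code E c = (\<lambda>Q. Q (\<lambda>m. c (from_nat_into E (fst (prod_decode m))) = snd (prod_decode m)))"

lemma inj_on_colouring_code:
  assumes "countable E"
  shows "inj_on (colouring_code E) (E \<rightarrow>\<^sub>E K)"
proof (rule inj_onI)
  fix c1 c2 assume c1: "c1 \<in> E \<rightarrow>\<^sub>E K" and c2: "c2 \<in> E \<rightarrow>\<^sub>E K" and eq: "colouring_code E c1 = colouring_code E c2"
  let ?code = "\<lambda>c m. c (from_nat_into E (fst (prod_decode m))) = snd (prod_decode m)"
  have code: "?code c1 = ?code c2"
    using fun_cong[OF eq, of "\<lambda>p. p = ?code c1"] by (simp add: colouring_code_def)
  show "c1 = c2"
  proof (rule ext)
    fix x show "c1 x = c2 x"
    proof (cases "x \<in> E")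
      case True
      then show ?thesis
        using fun_cong[OF code, of "prod_encode (to_nat_on E x, c1 x)"] assms by simp
    qed (use c1 c2 in \<open>auto simp: PiE_def extensional_def\<close>)
  qed
qed

lemma card_colours_le_card_invariant:
  assumes hom: "homogeneous_for F A" and a0: "a0 \<in> embeddings A F"
    and Y: "invariant_set F (colouring_action F A) Y" "finite Y" and c: "c \<in> Y"
  shows "finite (c ` embeddings A F) \<and> card (c ` embeddings A F) \<le> card Y"
proof -
  have "c ` embeddings A F \<subseteq> (\<lambda>c'. c' a0) ` Y"
  proof (rule image_subsetI)
    fix a assume a: "a \<in> embeddings A F"
    obtain g where g: "g \<in> Aut F" "compose (sdom A) g a = a0"
      using hom a a0 unfolding homogeneous_for_def by blast
    have "c a = (\<lambda>c'. c' a0) (colouring_action F A g c)"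
      using colouring_action_apply[OF g(1) a0] compose_aut_inv_cancel[OF g(1) embeddings_PiE[OF a]] g(2)
      by simp
    moreover have "colouring_action F A g c \<in> Y" using Y(1) g(1) c unfolding invariant_set_def by blast
    ultimately show "c a \<in> (\<lambda>c'. c' a0) ` Y" by (rule image_eqI)
  qed
  moreover have fin: "finite ((\<lambda>c'. c' a0) ` Y)" using Y(2) by simp
  ultimately have "card (c ` embeddings A F) \<le> card ((\<lambda>c'. c' a0) ` Y)" by (intro card_mono)
  then show ?thesis
    using finite_subset[OF \<open>c ` embeddings A F \<subseteq> _\<close> fin] card_image_le[OF Y(2), of "\<lambda>c'. c' a0"] by simp
qed

lemma orbit_closure_approximation:
  assumes c: "c \<in> colouring_space F A k closure_of ((\<lambda>g. colouring_action F A g c0) ` Aut F)"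
    and K: "finite K" "K \<subseteq> embeddings A F"
  shows "\<exists>g\<in>Aut F. \<forall>a\<in>K. c0 (compose (sdom A) (aut_inv F g) a) = c a"
proof -
  let ?P = "colouring_space F A k"
  define N where "N = {c' \<in> embeddings A F \<rightarrow>\<^sub>E {..<k}. \<forall>a\<in>K. c' a = c a}"
  have "c \<in> topspace ?P" using c by (simp add: in_closure_of)
  then have cP: "c \<in> embeddings A F \<rightarrow>\<^sub>E {..<k}" by (simp add: topspace_colouring_space)
  have "openin ?P N"
    unfolding N_def colouring_space_def using K cP by (intro openin_product_agree_finite) auto
  moreover have "c \<in> N" using cP by (simp add: N_def)
  ultimately obtain g where g: "g \<in> Aut F" and "colouring_action F A g c0 \<in> N"
    using c unfolding in_closure_of by blast
  have "c0 (compose (sdom A) (aut_inv F g) a) = c a" if "a \<in> K" for a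
  proof -
    have "colouring_action F A g c0 a = c a" using \<open>colouring_action F A g c0 \<in> N\<close> that by (simp add: N_def)
    then show ?thesis using colouring_action_apply[OF g, of a A c0] that K(2) by auto
  qed
  then show ?thesis using g by blast
qed

lemma small_colouring_in_orbit_closure:
  assumes wf: "wf_struc F" and cnt: "countable (sdom F)" and wfA: "wf_struc A" and finA: "finite (sdom A)"
    and hom: "homogeneous_for F A" and a0: "a0 \<in> embeddings A F" and d: "UMF_card_le F d"
    and c0: "c0 \<in> topspace (colouring_space F A k)"
  shows "\<exists>c \<in> colouring_space F A k closure_of ((\<lambda>g. colouring_action F A g c0) ` Aut F).
           finite (c ` embeddings A F) \<and> card (c ` embeddings A F) \<le> d"
proof -
  let ?P = "colouring_space F A k"
  let ?Z = "?P closure_of ((\<lambda>g. colouring_action F A g c0) ` Aut F)"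
  have fl: "flow F ?P (colouring_action F A)" by (rule flow_colouring_action[OF wfA wf finA])
  have "c0 \<in> ?Z"
  proof -
    have "(\<lambda>g. colouring_action F A g c0) ` Aut F \<subseteq> topspace ?P"
      using colouring_action_in_topspace[OF wfA wf _ c0] by blast
    moreover have "colouring_action F A (restrict id (sdom F)) c0 = c0"
      using fl c0 unfolding flow_def by blast
    then have "c0 \<in> (\<lambda>g. colouring_action F A g c0) ` Aut F"
      by (rule image_eqI[OF sym id_Aut[OF wf]])
    ultimately show ?thesis using closure_of_subset by blast
  qed
  then obtain Y where "Y \<subseteq> ?Z" and Y: "minimal_invariant F ?P (colouring_action F A) Y"
    using exists_minimal_invariant_subset[OF fl closedin_closure_of _ invariant_set_orbit_closure[OF wf fl c0]]
    by blast
  have "closedin ?P Y" using Y by (simp add: minimal_invariant_def)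
  then have YP: "Y \<subseteq> embeddings A F \<rightarrow>\<^sub>E {..<k}"
    using closedin_subset by (fastforce simp: topspace_colouring_space)
  then have "inj_on (colouring_code (embeddings A F)) (topspace (subtopology ?P Y))"
    using inj_on_colouring_code[OF countable_embeddings[OF finA cnt]] by (auto intro: inj_on_subset)
  then have finY: "finite Y" and cardY: "card Y \<le> d"
    using minimal_flow_card_le[OF minimal_flow_subtopology[OF fl Y] _ d] YP
    by (auto simp: topspace_colouring_space Int_absorb1)
  obtain c where c: "c \<in> Y" using Y unfolding minimal_invariant_def by blast
  moreover have "invariant_set F (colouring_action F A) Y" using Y by (simp add: minimal_invariant_def)
  ultimately have "finite (c ` embeddings A F) \<and> card (c ` embeddings A F) \<le> d"
    using card_colours_le_card_invariant[OF hom a0 _ finY] cardY by (meson le_trans)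
  then show ?thesis using c \<open>Y \<subseteq> ?Z\<close> by blast
qed

lemma copy_with_few_colours:
  assumes wf: "wf_struc F" and wfA: "wf_struc A" and wfB: "wf_struc B"
    and finA: "finite (sdom A)" and finB: "finite (sdom B)" and b0: "b0 \<in> embeddings B F"
    and c: "c \<in> colouring_space F A k closure_of
                 ((\<lambda>g. colouring_action F A g (restrict col (embeddings A F))) ` Aut F)"
    and few: "finite (c ` embeddings A F)" "card (c ` embeddings A F) \<le> d"
  shows "\<exists>b\<in>embeddings B F. card (col ` (\<lambda>a. compose (sdom A) b a) ` embeddings A B) \<le> d"
proof -
  define K where "K = (\<lambda>a. compose (sdom A) b0 a) ` embeddings A B"
  have K: "finite K" "K \<subseteq> embeddings A F"
    using finite_embeddings[OF finA finB] embedding_compose[OF wfA _ b0] by (auto simp: K_def)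
  obtain g where g: "g \<in> Aut F"
    and approx: "\<forall>a\<in>K. restrict col (embeddings A F) (compose (sdom A) (aut_inv F g) a) = c a"
    using orbit_closure_approximation[OF c K] by blast
  define b where "b = compose (sdom B) (aut_inv F g) b0"
  have b: "b \<in> embeddings B F"
    unfolding b_def using compose_Aut_embedding[OF wfB b0 aut_inv_Aut[OF wf g]] .
  have "col (compose (sdom A) b a) \<in> c ` embeddings A F" if a: "a \<in> embeddings A B" for a
  proof -
    have "compose (sdom A) b a = compose (sdom A) (aut_inv F g) (compose (sdom A) b0 a)"
      unfolding b_def using embeddings_PiE[OF a] by (intro compose_assoc[symmetric]) (auto simp: PiE_iff)
    moreover have inK: "compose (sdom A) b0 a \<in> K" using a by (simp add: K_def)
    moreover have "compose (sdom A) (aut_inv F g) (compose (sdom A) b0 a) \<in> embeddings A F"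
      using compose_Aut_embedding[OF wfA _ aut_inv_Aut[OF wf g]] inK K(2) by blast
    moreover have "restrict col (embeddings A F) (compose (sdom A) (aut_inv F g) (compose (sdom A) b0 a))
                   = c (compose (sdom A) b0 a)"
      using approx inK by blast
    ultimately have "col (compose (sdom A) b a) = c (compose (sdom A) b0 a)" by simp
    then show ?thesis using inK K(2) by blast
  qed
  then have "col ` (\<lambda>a. compose (sdom A) b a) ` embeddings A B \<subseteq> c ` embeddings A F" by blast
  then have "card (col ` (\<lambda>a. compose (sdom A) b a) ` embeddings A B) \<le> card (c ` embeddings A F)"
    by (rule card_mono[OF few(1)])
  then show ?thesis using b few(2) by (meson le_trans)
qed

theorem mainTheorem12:
  fixes F :: "('f,'r,'a) struc" and A :: "('f,'r,'b) struc" and d :: nat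
  assumes "wf_struc F" and "countable (sdom F)" and "locally_finite F"
    and "in_age A F" and "homogeneous_for F A"
    and "UMF_card_le F d"
  shows "\<forall>(B :: ('f,'r,'c) struc) k. in_age B F \<and> k \<ge> 2 \<longrightarrow> arrows F B A k d"
proof (intro allI impI)
  fix B :: "('f,'r,'c) struc" and k :: nat
  assume "in_age B F \<and> k \<ge> 2"
  \<comment> \<open>the argument works for every \<open>k\<close>\<close>
  then have B: "in_age B F" by simp
  have wfA: "wf_struc A" and wfB: "wf_struc B" using assms(4) B by (simp_all add: in_age_def)
  have finA: "finite (sdom A)" and finB: "finite (sdom B)"
    using in_age_finite[OF assms(3)] assms(4) B by blast+
  obtain a0 b0 where a0: "a0 \<in> embeddings A F" and b0: "b0 \<in> embeddings B F"
    using assms(4) B unfolding in_age_def by blast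
  show "arrows F B A k d"
    unfolding arrows_def
  proof (intro allI impI)
    fix col :: "('b \<Rightarrow> 'a) \<Rightarrow> nat" assume "col ` embeddings A F \<subseteq> {..<k}"
    then have "restrict col (embeddings A F) \<in> topspace (colouring_space F A k)"
      by (auto simp: topspace_colouring_space)
    then obtain c where "c \<in> colouring_space F A k closure_of
                           ((\<lambda>g. colouring_action F A g (restrict col (embeddings A F))) ` Aut F)"
      and "finite (c ` embeddings A F)" "card (c ` embeddings A F) \<le> d"
      using small_colouring_in_orbit_closure[OF assms(1,2) wfA finA assms(5) a0 assms(6)] by blast
    then show "\<exists>b\<in>embeddings B F. card (col ` (\<lambda>a. compose (sdom A) b a) ` embeddings A B) \<le> d"
      by (rule copy_with_few_colours[OF assms(1) wfA wfB finA finB b0])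
  qed
qed

end
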